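(* Let $k\ge r\ge3$ and $p,t\ge 0$ be integers and let $\pi\in\mathbb{C}_{<}(k,r|p,t)$ with $\pi^{(2)}_p\ge 2t+6$. Then every part of $\pi$ equal to $2t+2$ or to $2t+4$ has mark at most $1$ in $GG(\pi)$.
   Context: A partition $\pi=(\pi_1,\dots,\pi_\ell)$ is a finite non-increasing sequence of positive integers; "$a$ occurs in $\pi$" means $a=\pi_i$ for some $i$. Göllnitz–Gordon marking: $GG(\pi)$ assigns a positive integer (mark) to each part, processing the parts from smallest to largest; $\pi_i$ receives the smallest positive integer different from the marks of all parts $\pi_g$ with $g>i$ and $\pi_i-\pi_g\le 2$, where $\pi_i-\pi_g<2$ is required when $\pi_i$ is odd. An "$r$-marked part $a$" is a part equal to $a$ with mark $r$. $N_i(\pi)$ is the number of parts with mark $i$; $\pi^{(i)}_1\ge\dots\ge\pi^{(i)}_{N_i(\pi)}$ are the parts with mark $i$, with $\pi^{(i)}_0=+\infty$, $\pi^{(i)}_{N_i(\pi)+1}=-\infty$. $\mathbb{C}(k,r)$: partitions with (i) no odd part repeated; (ii) $\pi_i\ge\pi_{i+k-1}+2$ for $1\le i\le\ell-k+1$, strict if $\pi_i$ even; (iii) at most $r-1$ parts $\le 2$. Starting types: for $\pi\in\mathbb{C}(k,r)$ with $N_2=N_2(\pi)\ge1$, let $l$ be the largest integer in $\{0,\dots,N_2\}$ such that no odd part of $\pi$ is $\ge\pi^{(2)}_l$; for $l<i\le N_2$, $\pi^{(2)}_i$ has type $s_{-1}$. For $b=1,\dots,l$ in increasing order, type and auxiliary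 $\sigma_b$: for $b=1$: Case 1: 1-marked part $\pi^{(2)}_1-1$ exists and $\pi^{(2)}_1+2$ does not occur: type $s_0$, $\sigma_1=\pi^{(2)}_1-1$; Case 2: 1-marked $\pi^{(2)}_1-2$ exists and $\pi^{(2)}_1+2$ does not occur: type $s_1$, $\sigma_1=\pi^{(2)}_1-2$; Case 3: 1-marked $\pi^{(2)}_1+2$ exists: type $s_2$, $\sigma_1=\pi^{(2)}_1+2$; Case 4: 1-marked $\pi^{(2)}_1$ exists: type $s_3$, $\sigma_1=\pi^{(2)}_1$. For $2\le b\le l$: Case 1: 1-marked $\pi^{(2)}_b-1$ exists and, if a 1-marked $\pi^{(2)}_b+2$ exists, $\sigma_{b-1}=\pi^{(2)}_b+2$: type $s_0$, $\sigma_b=\pi^{(2)}_b-1$; Case 2: same with $\pi^{(2)}_b-2$: type $s_1$, $\sigma_b=\pi^{(2)}_b-2$; Case 3: 1-marked $\pi^{(2)}_b+2$ exists and $\sigma_{b-1}\ne\pi^{(2)}_b+2$: type $s_2$, $\sigma_b=\pi^{(2)}_b+2$; Case 4: 1-marked $\pi^{(2)}_b$ exists: type $s_3$, $\sigma_b=\pi^{(2)}_b$. $\mathbb{C}_{<}(k,r|p,t)$: the set of $\pi\in\mathbb{C}(k,r)$ such that (1) no odd part is $\ge 2t+1$; (2) $\pi^{(2)}_{p+1}<2t+1<\pi^{(2)}_p$ (in particular $p\le N_2(\pi)$); (3) if $\pi^{(2)}_p=2t+2$ then it is of starting type $s_2$ or $s_3$; (4) if $\pi^{(2)}_{p+1}=2t$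 then it is of starting type $s_0$ or $s_1$. *)

theory Defs
  imports Main "HOL-Library.Extended_Real"
begin

text \<open>A partition is a list of positive naturals in non-increasing order;
  pi_i (1-indexed in the paper) is xs ! (i-1).\<close>
definition is_partition :: "nat list \<Rightarrow> bool" where
  "is_partition xs \<longleftrightarrow> sorted_wrt (\<ge>) xs \<and> 0 \<notin> set xs"

text \<open>Goellnitz-Gordon closeness: part x (larger) vs later part y.\<close>
definition gg_close :: "nat \<Rightarrow> nat \<Rightarrow> bool" where
  "gg_close x y \<longleftrightarrow> x - y \<le> 2 \<and> (odd x \<longrightarrow> x - y < 2)"

text \<open>GG marks, computed from the smallest part (end of the list) to the largest.
  gg_marks xs ! j is the mark of xs ! j.\<close>
fun gg_marks :: "nat list \<Rightarrow> nat list" where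
  "gg_marks [] = []"
| "gg_marks (x # rest) =
     (let ms = gg_marks rest in
      (LEAST m::nat. 0 < m \<and> m \<notin> {ms ! g | g. g < length rest \<and> gg_close x (rest ! g)}) # ms)"

definition mark :: "nat list \<Rightarrow> nat \<Rightarrow> nat" where
  "mark xs j = gg_marks xs ! j"

definition marked_parts :: "nat list \<Rightarrow> nat \<Rightarrow> nat list" where
  "marked_parts xs i = [xs ! j. j \<leftarrow> [0..<length xs], mark xs j = i]"

definition Nmark :: "nat list \<Rightarrow> nat \<Rightarrow> nat" where
  "Nmark xs i = length (marked_parts xs i)"

text \<open>pi^(i)_j with pi^(i)_0 = +infinity and pi^(i)_(N_i+1) = -infinity
  (and also -infinity beyond).\<close>
definition pim :: "nat list \<Rightarrow> nat \<Rightarrow> nat \<Rightarrow> ereal" where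
  "pim xs i j = (if j = 0 then \<infinity>
                 else if j \<le> Nmark xs i then ereal (real (marked_parts xs i ! (j - 1)))
                 else -\<infinity>)"

definition one_marked :: "nat list \<Rightarrow> nat \<Rightarrow> bool" where
  "one_marked xs a \<longleftrightarrow> (\<exists>j < length xs. xs ! j = a \<and> mark xs j = 1)"

definition in_C :: "nat \<Rightarrow> nat \<Rightarrow> nat list \<Rightarrow> bool" where
  "in_C k r xs \<longleftrightarrow> is_partition xs
     \<and> (\<forall>i < length xs. \<forall>j < length xs. i \<noteq> j \<and> xs ! i = xs ! j \<longrightarrow> even (xs ! i))
     \<and> (\<forall>i. i + k - 1 < length xs \<longrightarrow>
           xs ! i \<ge> xs ! (i + k - 1) + 2 \<and>
           (even (xs ! i) \<longrightarrow> xs ! i > xs ! (i + k - 1) + 2))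
     \<and> length (filter (\<lambda>x. x \<le> 2) xs) \<le> r - 1"

datatype stype = Sm1 | S0 | S1 | S2 | S3

definition lidx :: "nat list \<Rightarrow> nat" where
  "lidx xs = (GREATEST l. l \<le> Nmark xs 2 \<and>
                (\<forall>x \<in> set xs. odd x \<longrightarrow> ereal (real x) < pim xs 2 l))"

text \<open>st xs b = (type of pi^(2)_b, sigma_b) for 1 <= b <= l (None if no case applies).\<close>
fun st :: "nat list \<Rightarrow> nat \<Rightarrow> stype option \<times> nat" where
  "st xs 0 = (None, 0)"
| "st xs (Suc b) =
    (let a = marked_parts xs 2 ! b; prev = snd (st xs b) in
     if b = 0 then
       (if one_marked xs (a - 1) \<and> a + 2 \<notin> set xs then (Some S0, a - 1)
        else if one_marked xs (a - 2) \<and> a + 2 \<notin> set xs then (Some S1, a - 2)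
        else if one_marked xs (a + 2) then (Some S2, a + 2)
        else if one_marked xs a then (Some S3, a)
        else (None, 0))
     else
       (if one_marked xs (a - 1) \<and> (one_marked xs (a + 2) \<longrightarrow> prev = a + 2) then (Some S0, a - 1)
        else if one_marked xs (a - 2) \<and> (one_marked xs (a + 2) \<longrightarrow> prev = a + 2) then (Some S1, a - 2)
        else if one_marked xs (a + 2) \<and> prev \<noteq> a + 2 then (Some S2, a + 2)
        else if one_marked xs a then (Some S3, a)
        else (None, 0)))"

definition start_type :: "nat list \<Rightarrow> nat \<Rightarrow> stype option" where
  "start_type xs i = (if lidx xs < i then Some Sm1 else fst (st xs i))"

definition in_Cless :: "nat \<Rightarrow> nat \<Rightarrow> nat \<Rightarrow> nat \<Rightarrow> nat list \<Rightarrow> bool" where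
  "in_Cless k r p t xs \<longleftrightarrow> in_C k r xs
     \<and> (\<forall>x \<in> set xs. odd x \<longrightarrow> x < 2 * t + 1)
     \<and> pim xs 2 (p + 1) < ereal (real (2 * t + 1)) \<and> ereal (real (2 * t + 1)) < pim xs 2 p
     \<and> (pim xs 2 p = ereal (real (2 * t + 2)) \<longrightarrow> start_type xs p \<in> {Some S2, Some S3})
     \<and> (pim xs 2 (p + 1) = ereal (real (2 * t)) \<longrightarrow> start_type xs (p + 1) \<in> {Some S0, Some S1})"

end

theory Submission
  imports Defs
begin

(* The hypotheses leave no 2-marked part in [2t+1, 2t+5]. So a part 2t+2 or 2t+4 of mark
   above 1 has mark at least 3, hence a GG-close 2-marked part just below it; that part can
   only be 2t, lying below 2t+2, so 2t = pi^(2)_(p+1) and its starting type is s_0 or s_1.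
   This type supplies a 1-marked part 2t-1 or 2t-2, and, as pi^(2)_p >= 2t+6 rules out
   sigma_p = 2t+2, excludes a 1-marked part 2t+2. The 1-marked part GG-close below our 2t+2
   is then 2t, which is GG-close to the 1-marked 2t-1 or 2t-2: two parts with equal marks
   cannot be GG-close. *)

lemma mark_Cons_0: "mark (x # xs) 0 =
    (LEAST m. 0 < m \<and> m \<notin> {mark xs g | g. g < length xs \<and> gg_close x (xs ! g)})"
  by (simp add: mark_def Let_def)

lemma mark_Cons_Suc [simp]: "mark (x # xs) (Suc j) = mark xs j"
  by (simp add: mark_def Let_def)

lemma mark_eq_Least:
  assumes "j < length xs"
  shows "mark xs j =
    (LEAST m. 0 < m \<and> m \<notin> {mark xs g | g. j < g \<and> g < length xs \<and> gg_close (xs ! j) (xs ! g)})"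
  using assms
proof (induction xs arbitrary: j)
  case (Cons x xs)
  have shift: "{mark (x # xs) g | g. j < g \<and> g < length (x # xs) \<and> gg_close ((x # xs) ! j) ((x # xs) ! g)}
      = {mark xs g | g. j \<le> g \<and> g < length xs \<and> gg_close ((x # xs) ! j) (xs ! g)}"
  proof (intro set_eqI iffI; elim CollectE exE conjE)
    fix m g
    assume "m = mark (x # xs) g" "j < g" "g < length (x # xs)" "gg_close ((x # xs) ! j) ((x # xs) ! g)"
    moreover obtain g' where "g = Suc g'" using \<open>j < g\<close> by (cases g) auto
    ultimately show "m \<in> {mark xs g | g. j \<le> g \<and> g < length xs \<and> gg_close ((x # xs) ! j) (xs ! g)}"
      by (auto intro!: exI[of _ g'])
  next
    fix m g
    assume "m = mark xs g" "j \<le> g" "g < length xs" "gg_close ((x # xs) ! j) (xs ! g)"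
    then show "m \<in> {mark (x # xs) g | g. j < g \<and> g < length (x # xs) \<and> gg_close ((x # xs) ! j) ((x # xs) ! g)}"
      by (auto intro!: exI[of _ "Suc g"])
  qed
  show ?case
  proof (cases j)
    case 0
    then show ?thesis unfolding shift by (simp add: mark_Cons_0)
  next
    case (Suc j')
    then have "j' < length xs" using Cons.prems by simp
    then have "mark (x # xs) j =
        (LEAST m. 0 < m \<and> m \<notin> {mark xs g | g. j' < g \<and> g < length xs \<and> gg_close (xs ! j') (xs ! g)})"
      using Cons.IH[OF \<open>j' < length xs\<close>] Suc by simp
    then show ?thesis unfolding shift using Suc by (simp add: Suc_le_eq)
  qed
qed simp

lemma mark_pos_not_mark_of_close:
  assumes "j < length xs"
  shows "0 < mark xs j \<and>
    mark xs j \<notin> {mark xs g | g. j < g \<and> g < length xs \<and> gg_close (xs ! j) (xs ! g)}"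
proof -
  let ?S = "{mark xs g | g. j < g \<and> g < length xs \<and> gg_close (xs ! j) (xs ! g)}"
  have "finite (insert 0 ?S)" by simp
  then obtain m :: nat where "m \<notin> insert 0 ?S" using ex_new_if_finite infinite_UNIV_nat by blast
  then have "0 < m \<and> m \<notin> ?S" by simp
  then show ?thesis unfolding mark_eq_Least[OF assms] by (rule LeastI)
qed

lemma mark_pos: "j < length xs \<Longrightarrow> 0 < mark xs j"
  using mark_pos_not_mark_of_close by blast

lemma mark_neq_if_gg_close:
  assumes "j < g" and "g < length xs" and "gg_close (xs ! j) (xs ! g)"
  shows "mark xs j \<noteq> mark xs g"
  using mark_pos_not_mark_of_close[of j xs] assms by auto

lemma mark_less_obtains_gg_close:
  assumes "j < length xs" and "0 < m" and "m < mark xs j"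
  obtains g where "j < g" "g < length xs" "gg_close (xs ! j) (xs ! g)" "mark xs g = m"
proof -
  let ?S = "{mark xs g | g. j < g \<and> g < length xs \<and> gg_close (xs ! j) (xs ! g)}"
  have "\<not> (0 < m \<and> m \<notin> ?S)"
    using assms(3) unfolding mark_eq_Least[OF assms(1)] by (rule not_less_Least)
  then show ?thesis using assms(2) that by blast
qed

lemma same_mark_not_gg_close:
  assumes "sorted_wrt (\<ge>) xs" and "j < length xs" and "g < length xs"
    and "xs ! g < xs ! j" and "mark xs j = mark xs g"
  shows "\<not> gg_close (xs ! j) (xs ! g)"
proof -
  have "j < g"
  proof (rule ccontr)
    assume "\<not> j < g"
    then have "xs ! j \<le> xs ! g"
      using sorted_wrt_nth_less[OF assms(1), of g j] assms(2) by (cases "g = j") auto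
    with assms(4) show False by simp
  qed
  then show ?thesis using mark_neq_if_gg_close assms(3,5) by blast
qed

lemma nth_in_marked_parts: "j < length xs \<Longrightarrow> mark xs j = i \<Longrightarrow> xs ! j \<in> set (marked_parts xs i)"
  by (auto simp: marked_parts_def)

lemma sorted_marked_parts:
  assumes "sorted_wrt (\<ge>) xs"
  shows "sorted_wrt (\<ge>) (marked_parts xs i)"
proof -
  have "[xs ! j. j \<leftarrow> l, mark xs j = i] = map ((!) xs) (filter (\<lambda>j. mark xs j = i) l)" for l
    by (induction l) auto
  then have "marked_parts xs i = map ((!) xs) (filter (\<lambda>j. mark xs j = i) [0..<length xs])"
    unfolding marked_parts_def by blast
  moreover have "sorted_wrt (\<lambda>a b. xs ! b \<le> xs ! a) [0..<length xs]"
    using assms by (auto simp: sorted_wrt_iff_nth_less)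
  ultimately show ?thesis by (simp add: sorted_wrt_map sorted_wrt_filter)
qed

lemma pim_Suc:
  "pim xs i (Suc b) = (if b < Nmark xs i then ereal (real (marked_parts xs i ! b)) else -\<infinity>)"
  by (simp add: pim_def)

lemma pim_antimono:
  assumes "sorted_wrt (\<ge>) xs" and "j \<le> j'"
  shows "pim xs i j' \<le> pim xs i j"
proof (cases j)
  case 0
  then show ?thesis by (simp add: pim_def)
next
  case (Suc b)
  then obtain b' where b': "j' = Suc b'" "b \<le> b'" using assms(2) by (cases j') auto
  have "marked_parts xs i ! b' \<le> marked_parts xs i ! b" if "b' < Nmark xs i"
    using sorted_wrt_nth_less[OF sorted_marked_parts[OF assms(1)], of b b' i] b'(2) that
    by (cases "b = b'") (auto simp: Nmark_def)
  then show ?thesis using Suc b' by (auto simp: pim_Suc)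
qed

lemma marked_part_obtains_pim:
  assumes "y \<in> set (marked_parts xs i)"
  obtains q where "pim xs i (Suc q) = ereal (real y)"
proof -
  obtain q where "q < Nmark xs i" "y = marked_parts xs i ! q"
    using assms by (auto simp: Nmark_def in_set_conv_nth)
  then show ?thesis using that[of q] by (simp add: pim_Suc)
qed

lemma marked_part_not_in_gap:
  assumes "sorted_wrt (\<ge>) xs"
    and "pim xs i (Suc p) < ereal (real a)" and "ereal (real b) \<le> pim xs i p"
    and "y \<in> set (marked_parts xs i)"
  shows "y < a \<or> b \<le> y"
proof -
  obtain q where q: "pim xs i (Suc q) = ereal (real y)" using marked_part_obtains_pim assms(4) .
  show ?thesis
  proof (cases "q < p")
    case True
    then have "pim xs i p \<le> ereal (real y)" using pim_antimono[OF assms(1), of "Suc q" p i] q by simp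
    from order.trans[OF assms(3) this] show ?thesis by simp
  next
    case False
    then have "ereal (real y) \<le> pim xs i (Suc p)" using pim_antimono[OF assms(1), of "Suc p" "Suc q" i] q by simp
    from order.strict_trans1[OF this assms(2)] show ?thesis by simp
  qed
qed

lemma pim_Suc_eq_marked_part:
  assumes "sorted_wrt (\<ge>) xs"
    and "pim xs i (Suc p) < ereal (real (y + 1))" and "ereal (real (y + 1)) \<le> pim xs i p"
    and "y \<in> set (marked_parts xs i)"
  shows "pim xs i (Suc p) = ereal (real y)"
proof -
  obtain q where q: "pim xs i (Suc q) = ereal (real y)" using marked_part_obtains_pim assms(4) .
  have "\<not> q < p"
  proof
    assume "q < p"
    then have "pim xs i p \<le> ereal (real y)" using pim_antimono[OF assms(1), of "Suc q" p i] q by simp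
    from order.trans[OF assms(3) this] show False by simp
  qed
  then have "ereal (real y) \<le> pim xs i (Suc p)" using pim_antimono[OF assms(1), of "Suc p" "Suc q" i] q by simp
  then show ?thesis using assms(2) by (auto simp: pim_Suc split: if_splits)
qed

declare st.simps [simp del]

lemma st_Suc_S0_S1:
  assumes "fst (st xs (Suc b)) \<in> {Some S0, Some S1}"
  shows "one_marked xs (marked_parts xs 2 ! b - 1) \<or> one_marked xs (marked_parts xs 2 ! b - 2)"
    and "b = 0 \<Longrightarrow> marked_parts xs 2 ! b + 2 \<notin> set xs"
    and "0 < b \<Longrightarrow> one_marked xs (marked_parts xs 2 ! b + 2) \<Longrightarrow> snd (st xs b) = marked_parts xs 2 ! b + 2"
  using assms by (auto simp: st.simps Let_def split: if_splits)

lemma snd_st_Suc: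
  "snd (st xs (Suc b)) \<in> {marked_parts xs 2 ! b - 1, marked_parts xs 2 ! b - 2,
     marked_parts xs 2 ! b + 2, marked_parts xs 2 ! b, 0}"
  by (auto simp: st.simps Let_def)

lemma start_type_S0_S1_wide_gap:
  assumes "start_type xs (Suc p) \<in> {Some S0, Some S1}"
    and "pim xs 2 (Suc p) = ereal (real a)" and "ereal (real (a + 4)) < pim xs 2 p"
  shows "one_marked xs (a - 1) \<or> one_marked xs (a - 2)" and "\<not> one_marked xs (a + 2)"
proof -
  have a: "marked_parts xs 2 ! p = a" using assms(2) by (auto simp: pim_Suc split: if_splits)
  have "fst (st xs (Suc p)) \<in> {Some S0, Some S1}"
    using assms(1) by (auto simp: start_type_def split: if_splits)
  note S = st_Suc_S0_S1[OF this, unfolded a]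
  show "one_marked xs (a - 1) \<or> one_marked xs (a - 2)" by (fact S(1))
  show "\<not> one_marked xs (a + 2)"
  proof (cases p)
    case 0
    then show ?thesis using S(2) by (auto simp: one_marked_def in_set_conv_nth)
  next
    case (Suc p')
    have "a + 4 < marked_parts xs 2 ! p'" using assms(3) Suc by (auto simp: pim_Suc split: if_splits)
    then have "snd (st xs p) \<noteq> a + 2" using snd_st_Suc[of xs p'] Suc by auto
    then show ?thesis using S(3) Suc by auto
  qed
qed

lemma one_marked_add_two:
  assumes sorted: "sorted_wrt (\<ge>) xs" and "even a" and "0 < a"
    and "a + 1 \<notin> set xs" and "a + 2 \<in> set xs"
    and below: "one_marked xs (a - 1) \<or> one_marked xs (a - 2)"
  shows "one_marked xs (a + 2)"
proof (rule ccontr)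
  assume not_one: "\<not> one_marked xs (a + 2)"
  obtain j where j: "j < length xs" "xs ! j = a + 2" using assms(5) by (auto simp: in_set_conv_nth)
  have "1 < mark xs j" using mark_pos[OF j(1)] not_one j by (auto simp: one_marked_def)
  then obtain h where h: "j < h" "h < length xs" "gg_close (xs ! j) (xs ! h)" "mark xs h = 1"
    using mark_less_obtains_gg_close[OF j(1), of 1] by auto
  have "xs ! h \<le> a + 2" using sorted_wrt_nth_less[OF sorted h(1,2)] j(2) by simp
  moreover have "xs ! h \<noteq> a + 1" using assms(4) nth_mem[OF h(2)] by auto
  moreover have "xs ! h \<noteq> a + 2" using not_one h(2,4) by (auto simp: one_marked_def)
  ultimately have h_eq: "xs ! h = a" using h(3) j(2) by (auto simp: gg_close_def)
  obtain i where i: "i < length xs" "xs ! i = a - 1 \<or> xs ! i = a - 2" "mark xs i = 1"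
    using below by (auto simp: one_marked_def)
  have "\<not> gg_close (xs ! h) (xs ! i)"
    using same_mark_not_gg_close[OF sorted h(2) i(1)] h(4) h_eq i(2,3) \<open>0 < a\<close> by auto
  moreover have "gg_close (xs ! h) (xs ! i)" using h_eq i(2) \<open>even a\<close> by (auto simp: gg_close_def)
  ultimately show False by blast
qed

lemma in_ClessD:
  assumes "in_Cless k r p t xs"
  shows "sorted_wrt (\<ge>) xs" and "0 \<notin> set xs" and "\<forall>x \<in> set xs. odd x \<longrightarrow> x < 2 * t + 1"
    and "pim xs 2 (Suc p) < ereal (real (2 * t + 1))" and "ereal (real (2 * t + 1)) < pim xs 2 p"
    and "pim xs 2 (Suc p) = ereal (real (2 * t)) \<Longrightarrow> start_type xs (Suc p) \<in> {Some S0, Some S1}"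
  using assms by (auto simp: in_Cless_def in_C_def is_partition_def)

theorem lemma2p4:
  fixes k r p t :: nat and xs :: "nat list"
  assumes "3 \<le> r" and "r \<le> k"
    and "in_Cless k r p t xs"
    and "pim xs 2 p \<ge> ereal (real (2 * t + 6))"
  shows "\<forall>j < length xs. (xs ! j = 2 * t + 2 \<or> xs ! j = 2 * t + 4) \<longrightarrow> mark xs j \<le> 1"
proof (intro allI impI)
  fix j assume j: "j < length xs" and x: "xs ! j = 2 * t + 2 \<or> xs ! j = 2 * t + 4"
  note C = in_ClessD[OF assms(3)]
  note sorted = C(1)
  have gap: "y < 2 * t + 1 \<or> 2 * t + 6 \<le> y" if "y \<in> set (marked_parts xs 2)" for y
    using marked_part_not_in_gap[OF sorted C(4) assms(4) that] .
  show "mark xs j \<le> 1"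
  proof (rule ccontr)
    assume "\<not> mark xs j \<le> 1"
    moreover have "mark xs j \<noteq> 2" using gap[OF nth_in_marked_parts[OF j]] x by fastforce
    ultimately obtain g where g: "j < g" "g < length xs" "gg_close (xs ! j) (xs ! g)" "mark xs g = 2"
      using mark_less_obtains_gg_close[OF j, of 2] by auto
    have "xs ! g \<le> xs ! j" using sorted_wrt_nth_less[OF sorted g(1,2)] by simp
    moreover have g_marked: "xs ! g \<in> set (marked_parts xs 2)" using nth_in_marked_parts[OF g(2,4)] .
    ultimately have xg: "xs ! g = 2 * t" and xj: "xs ! j = 2 * t + 2"
      using gap[OF g_marked] g(3) x by (auto simp: gg_close_def)
    have "0 < t" using C(2) nth_mem[OF g(2)] xg by (auto intro: gr0I)
    have "pim xs 2 (Suc p) = ereal (real (2 * t))"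
      using pim_Suc_eq_marked_part[OF sorted, of 2 p "2 * t"] C(4,5) g_marked xg by auto
    then have "one_marked xs (2 * t - 1) \<or> one_marked xs (2 * t - 2)" "\<not> one_marked xs (2 * t + 2)"
      using start_type_S0_S1_wide_gap[of xs p "2 * t"] C(6) order.strict_trans2[OF _ assms(4)] by auto
    moreover have "2 * t + 1 \<notin> set xs" "2 * t + 2 \<in> set xs" using C(3) nth_mem[OF j] xj by auto
    ultimately show False using one_marked_add_two[OF sorted, of "2 * t"] \<open>0 < t\<close> by auto
  qed
qed

end
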